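(* With the notation of the context, let $\mathcal{X}/\mathcal{S}$ be the projective closure in the weighted projective space $\mathbb{P}(1,3,1)$ over $\mathcal{S}=\operatorname{Spec}k[[\epsilon]]$ of $\operatorname{Spec}\big(R[x,y]/(y^2+\det(Q_1(\epsilon)+2xQ_2(\epsilon)+x^2Q_3(\epsilon)))\big)$, where $R=k[[\epsilon]]$ and each quadratic form is identified with its symmetric $3\times 3$ matrix. Then $\mathcal{X}$ is smooth over $\mathcal{S}$ with geometrically connected fibres. In particular its special fiber $X$, the curve $y^2=-\det(q_1+2xq_2+x^2q_3)$, is smooth.
   Context: $k$ is a field of characteristic $\neq 2$; $f=f_2x^2+f_1xz+f_0z^2$, $g=g_2x^2+g_1xz+g_0z^2$, $h=h_2x^2+h_1xz+h_0z^2\in k[x,z]$ are such that $C: y^4-h(x,z)y^2+f(x,z)g(x,z)=0\subset\mathbb{P}^2$ is a smooth non-hyperelliptic genus-$3$ curve, the curve $D: y^2-h(x,z)y+f(x,z)g(x,z)=0$ in $\mathbb{P}(1,2,1)$ is smooth of genus $1$, and $A=\begin{bmatrix} f_2 & f_1 & f_0 \\ h_2 & h_1 & h_0 \\ g_2 & g_1 & g_0 \end{bmatrix}$ is invertible. The quadratic forms $q_1,q_2,q_3\in k[x_1,x_2,x_3]$ are defined by $(q_1,q_2,q_3)^T=A^{-1}(x_1x_2,\;x_2^2+x_1x_3,\;x_2x_3)^T$, and $Q_1(\epsilon)=q_1+\epsilon((x_2^2+x_3^2)-q_1)$, $Q_2(\epsilon)=q_2+\epsilon(x_1^2-q_2)$,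 $Q_3(\epsilon)=q_3+\epsilon((x_2^2-x_3^2)-q_3)$. *)

theory Defs
  imports "HOL-Analysis.Analysis" "HOL-Computational_Algebra.Computational_Algebra"
begin

definition alg_closed_type :: "'K::field itself \<Rightarrow> bool" where
  "alg_closed_type T \<longleftrightarrow> (\<forall>p::'K poly. degree p > 0 \<longrightarrow> (\<exists>x. poly p x = 0))"

(* ring homomorphism between fields (automatically an embedding) *)
definition field_hom :: "('a::field \<Rightarrow> 'b::field) \<Rightarrow> bool" where
  "field_hom \<phi> \<longleftrightarrow> \<phi> 1 = 1 \<and> (\<forall>a b. \<phi> (a + b) = \<phi> a + \<phi> b \<and> \<phi> (a * b) = \<phi> a * \<phi> b)"

definition map_mat :: "('a \<Rightarrow> 'b) \<Rightarrow> 'a^3^3 \<Rightarrow> 'b^3^3" where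
  "map_mat \<phi> M = (\<chi> i j. \<phi> (M$i$j))"

definition smat :: "'a::times \<Rightarrow> 'a^3^3 \<Rightarrow> 'a^3^3" where
  "smat c M = (\<chi> i j. c * M$i$j)"

(* symmetric matrix of the ternary quadratic form
   a11 x1^2 + a22 x2^2 + a33 x3^2 + a12 x1 x2 + a13 x1 x3 + a23 x2 x3 *)
definition qmat :: "'a::field \<Rightarrow> 'a \<Rightarrow> 'a \<Rightarrow> 'a \<Rightarrow> 'a \<Rightarrow> 'a \<Rightarrow> 'a^3^3" where
  "qmat a11 a22 a33 a12 a13 a23 =
     vector [vector [a11, a12/2, a13/2], vector [a12/2, a22, a23/2], vector [a13/2, a23/2, a33]]"

definition bq :: "'a::comm_ring_1 \<Rightarrow> 'a \<Rightarrow> 'a \<Rightarrow> 'a \<Rightarrow> 'a \<Rightarrow> 'a" where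
  "bq a2 a1 a0 x z = a2 * x^2 + a1 * x * z + a0 * z^2"

definition quartic_C_smooth ::
  "'K::field \<Rightarrow> 'K \<Rightarrow> 'K \<Rightarrow> 'K \<Rightarrow> 'K \<Rightarrow> 'K \<Rightarrow> 'K \<Rightarrow> 'K \<Rightarrow> 'K \<Rightarrow> bool" where
  "quartic_C_smooth f2 f1 f0 h2 h1 h0 g2 g1 g0 \<longleftrightarrow>
    \<not> (\<exists>x y z. (x, y, z) \<noteq> (0, 0, 0) \<and>
        (let f = bq f2 f1 f0 x z; h = bq h2 h1 h0 x z; g = bq g2 g1 g0 x z;
             fx = 2*f2*x + f1*z; hx = 2*h2*x + h1*z; gx = 2*g2*x + g1*z;
             fz = f1*x + 2*f0*z; hz = h1*x + 2*h0*z; gz = g1*x + 2*g0*z in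
         y^4 - h * y^2 + f * g = 0 \<and>
         - hx * y^2 + fx * g + f * gx = 0 \<and>
         4 * y^3 - 2 * h * y = 0 \<and>
         - hz * y^2 + fz * g + f * gz = 0))"

(* Smoothness of D : y^2 - h y + f g = 0 in the weighted projective plane P(1,2,1)(K)
   (y of weight 2): no point (x:y:z), (x,z) \<noteq> (0,0), where the weighted-homogeneous
   form and all its partial derivatives vanish. *)
definition curve_D_smooth ::
  "'K::field \<Rightarrow> 'K \<Rightarrow> 'K \<Rightarrow> 'K \<Rightarrow> 'K \<Rightarrow> 'K \<Rightarrow> 'K \<Rightarrow> 'K \<Rightarrow> 'K \<Rightarrow> bool" where
  "curve_D_smooth f2 f1 f0 h2 h1 h0 g2 g1 g0 \<longleftrightarrow>
    \<not> (\<exists>x y z. (x, z) \<noteq> (0, 0) \<and>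
        (let f = bq f2 f1 f0 x z; h = bq h2 h1 h0 x z; g = bq g2 g1 g0 x z;
             fx = 2*f2*x + f1*z; hx = 2*h2*x + h1*z; gx = 2*g2*x + g1*z;
             fz = f1*x + 2*f0*z; hz = h1*x + 2*h0*z; gz = g1*x + 2*g0*z in
         y^2 - h * y + f * g = 0 \<and>
         - hx * y + fx * g + f * gx = 0 \<and>
         2 * y - h = 0 \<and>
         - hz * y + fz * g + f * gz = 0))"

(* For symmetric 3x3 matrices Q1 Q2 Q3 over K, the projective closure in P(1,3,1)
   of  y^2 + det(Q1 + 2 x Q2 + x^2 Q3) = 0  is  y^2 + det(z^2 Q1 + 2 x z Q2 + x^2 Q3) = 0.
   Its two affine charts z = 1 and x = 1 cover it (x = z = 0 forces y = 0).
   chart_z1: the polynomial det(Q1 + 2 x Q2 + x^2 Q3) in x;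
   chart_x1: the polynomial det(z^2 Q1 + 2 z Q2 + Q3) in z. *)
definition chart_z1 :: "'K::field^3^3 \<Rightarrow> 'K^3^3 \<Rightarrow> 'K^3^3 \<Rightarrow> 'K poly" where
  "chart_z1 Q1 Q2 Q3 = det (\<chi> i j. [: Q1$i$j, 2 * Q2$i$j, Q3$i$j :])"

definition chart_x1 :: "'K::field^3^3 \<Rightarrow> 'K^3^3 \<Rightarrow> 'K^3^3 \<Rightarrow> 'K poly" where
  "chart_x1 Q1 Q2 Q3 = det (\<chi> i j. [: Q3$i$j, 2 * Q2$i$j, Q1$i$j :])"

definition affine_dc_smooth :: "'K::field poly \<Rightarrow> bool" where
  "affine_dc_smooth p \<longleftrightarrow>
     \<not> (\<exists>t y. y^2 + poly p t = 0 \<and> 2 * y = 0 \<and> poly (pderiv p) t = 0)"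

definition X_smooth :: "'K::field^3^3 \<Rightarrow> 'K^3^3 \<Rightarrow> 'K^3^3 \<Rightarrow> bool" where
  "X_smooth Q1 Q2 Q3 \<longleftrightarrow>
     affine_dc_smooth (chart_z1 Q1 Q2 Q3) \<and> affine_dc_smooth (chart_x1 Q1 Q2 Q3)"

(* connectedness of the double cover y^2 = -det(...) over an algebraically closed
   field: the curve splits into the two components y = +-G exactly when
   -det(Q1 + 2xQ2 + x^2Q3) is the square of a polynomial. *)
definition X_connected :: "'K::field^3^3 \<Rightarrow> 'K^3^3 \<Rightarrow> 'K^3^3 \<Rightarrow> bool" where
  "X_connected Q1 Q2 Q3 \<longleftrightarrow> \<not> (\<exists>G. - chart_z1 Q1 Q2 Q3 = G^2)"

definition Qeps :: "'a::field^3^3 \<Rightarrow> 'a^3^3 \<Rightarrow> 'a fls^3^3" where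
  "Qeps q D = map_mat fls_const q + smat fls_X (map_mat fls_const D - map_mat fls_const q)"

end

(* Write Q(x) = Q1 + 2 x Q2 + x^2 Q3. The defining equations of the q_i say that
   Q(x) = a(x) x1 x2 + b(x) (x2^2 + x1 x3) + c(x) x2 x3 with (a, b, c) = (1, 2x, x^2) A^-1,
   so the sextic P(x) = det Q(x) equals b (a c - b^2) / 4.  At a double root t of P the binary
   forms satisfy a f + b h + c g = (x + t z)^2.  If b(t) = 0 then f g vanishes doubly at
   (-t : 1), a singular point of C; otherwise a c = b^2 and one finds a singular point of D.
   Hence both charts of the special fibre y^2 = -P(x) are smooth, i.e. P is separable of
   degree at least 5.  Over k((eps)) the polynomial P_eps has coefficients in k[[eps]] and
   reduces to P; by Gauss' lemma a repeated factor of P_eps would survive the reduction or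
   lower the degree by at least two, so P_eps is separable and the generic fibre is smooth.
   Connectedness follows since -P cannot be a square: a square has a repeated root or is
   constant. *)

theory Submission
  imports Defs
begin

(* After importing Formal_Laurent_Series, x $ n also denotes power series coefficients; every
   matrix entry M$i$j is then ambiguous and larger matrix terms no longer parse in time. *)
unbundle no Formal_Power_Series.fps_syntax

section \<open>Ring homomorphisms\<close>

locale idom_hom =
  fixes h :: "'a::idom \<Rightarrow> 'b::idom"
  assumes hom_1: "h 1 = 1"
    and hom_add: "h (x + y) = h x + h y"
    and hom_mult: "h (x * y) = h x * h y"
begin

lemma hom_0: "h 0 = 0"
  using hom_add[of 0 0] by (metis add.right_neutral add_left_cancel)

lemma hom_uminus: "h (- x) = - h x"
  using hom_add[of x "- x"] by (simp add: hom_0 add_eq_0_iff2)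

lemma hom_diff: "h (x - y) = h x - h y"
  using hom_add[of x "- y"] by (simp add: hom_uminus)

lemma hom_of_nat: "h (of_nat n) = of_nat n"
  by (induction n) (simp_all add: hom_0 hom_1 hom_add)

lemma hom_numeral: "h (numeral n) = numeral n"
  using hom_of_nat[of "numeral n"] by simp

lemma hom_sum: "h (sum f A) = (\<Sum>x\<in>A. h (f x))"
  by (induction A rule: infinite_finite_induct) (simp_all add: hom_0 hom_add)

lemmas hom_simps = hom_0 hom_1 hom_add hom_mult hom_uminus hom_diff hom_of_nat hom_numeral

lemma map_poly_add: "map_poly h (p + q) = map_poly h p + map_poly h q"
  by (rule poly_eqI) (simp add: coeff_map_poly hom_simps)

lemma map_poly_diff: "map_poly h (p - q) = map_poly h p - map_poly h q"
  by (rule poly_eqI) (simp add: coeff_map_poly hom_simps)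

lemma map_poly_mult: "map_poly h (p * q) = map_poly h p * map_poly h q"
  by (rule poly_eqI) (simp add: coeff_map_poly coeff_mult hom_simps hom_sum)

lemma map_poly_pderiv: "map_poly h (pderiv p) = pderiv (map_poly h p)"
  by (rule poly_eqI) (simp add: coeff_map_poly coeff_pderiv hom_simps del: of_nat_Suc)

lemma map_mat_smat_sum:
  "map_mat h (smat a M + smat b N + smat c P) =
     smat (h a) (map_mat h M) + smat (h b) (map_mat h N) + smat (h c) (map_mat h P)"
  by (simp add: map_mat_def smat_def vec_eq_iff hom_add hom_mult)

lemma map_poly_det3: "map_poly h (det M) = det (\<chi> i j. map_poly h (M$i$j))" for M :: "'a poly^3^3"
  unfolding det_3 by (simp add: map_poly_add map_poly_diff map_poly_mult)

end

lemma idom_hom_if_field_hom: "field_hom h \<Longrightarrow> idom_hom h"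
  by (simp add: field_hom_def idom_hom_def)

lemma field_hom_eq_0_iff:
  assumes "field_hom h"
  shows "h a = 0 \<longleftrightarrow> a = 0"
proof
  assume "h a = 0"
  interpret idom_hom h using assms by (rule idom_hom_if_field_hom)
  have "h a * h (inverse a) = 1" if "a \<noteq> 0"
    using that hom_mult[of a "inverse a"] by (simp add: hom_1)
  then show "a = 0" using \<open>h a = 0\<close> by auto
qed (use assms in \<open>simp add: idom_hom.hom_0 idom_hom_if_field_hom\<close>)

lemma field_hom_divide:
  assumes "field_hom h"
  shows "h (a / b) = h a / h b"
proof (cases "b = 0")
  case False
  interpret idom_hom h using assms by (rule idom_hom_if_field_hom)
  have "h a = h b * h (a / b)" using False hom_mult[of b "a / b"] by simp
  then show ?thesis using False field_hom_eq_0_iff[OF assms] by (simp add: field_simps)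
qed (use assms in \<open>simp add: idom_hom.hom_0 idom_hom_if_field_hom\<close>)

lemma degree_map_poly_field_hom: "field_hom h \<Longrightarrow> degree (map_poly h p) = degree p"
  by (rule degree_map_poly) (simp add: field_hom_eq_0_iff)

lemma map_mat_qmat:
  "field_hom h \<Longrightarrow> map_mat h (qmat a b c d e f) = qmat (h a) (h b) (h c) (h d) (h e) (h f)"
  by (simp add: map_mat_def qmat_def vec_eq_iff forall_3 field_hom_divide
      idom_hom.hom_numeral idom_hom_if_field_hom)

section \<open>The pencil determinant\<close>

definition pencil_det :: "'a::comm_ring_1^3^3 \<Rightarrow> 'a^3^3 \<Rightarrow> 'a^3^3 \<Rightarrow> 'a poly" where
  "pencil_det Q1 Q2 Q3 = det (\<chi> i j. [:Q1$i$j, 2 * Q2$i$j, Q3$i$j:])"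

lemma chart_z1_eq_pencil_det: "chart_z1 Q1 Q2 Q3 = pencil_det Q1 Q2 Q3"
  by (simp add: chart_z1_def pencil_det_def)

lemma chart_x1_eq_pencil_det: "chart_x1 Q1 Q2 Q3 = pencil_det Q3 Q2 Q1"
  by (simp add: chart_x1_def pencil_det_def)

lemma (in idom_hom) map_poly_pencil_det:
  "map_poly h (pencil_det Q1 Q2 Q3) = pencil_det (map_mat h Q1) (map_mat h Q2) (map_mat h Q3)"
  unfolding pencil_det_def map_poly_det3 by (simp add: map_mat_def map_poly_pCons hom_simps)

lemma chart_z1_map_mat:
  "field_hom h \<Longrightarrow>
    chart_z1 (map_mat h Q1) (map_mat h Q2) (map_mat h Q3) = map_poly h (chart_z1 Q1 Q2 Q3)"
  by (simp add: chart_z1_eq_pencil_det idom_hom.map_poly_pencil_det[OF idom_hom_if_field_hom])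

lemma degree_det3_le:
  fixes M :: "'a::comm_ring_1 poly^3^3"
  assumes "\<And>i j. degree (M$i$j) \<le> d"
  shows "degree (det M) \<le> 3 * d"
proof -
  have triple: "degree (M$i$j * M$k$l * M$m$n) \<le> 3 * d" for i j k l m n
    using degree_mult_le[of "M$i$j * M$k$l" "M$m$n"] degree_mult_le[of "M$i$j" "M$k$l"]
      assms[of i j] assms[of k l] assms[of m n] by linarith
  show ?thesis
    unfolding det_3 by (intro degree_add_le degree_diff_le triple)
qed

lemma degree_pencil_det_le: "degree (pencil_det Q1 Q2 Q3) \<le> 6"
  using degree_det3_le[of "\<chi> i j. [:Q1$i$j, 2 * Q2$i$j, Q3$i$j:]" 2]
  by (simp add: pencil_det_def degree_pCons_le)

lemma coeff_pencil_det_reverse: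
  "coeff (pencil_det Q3 Q2 Q1) 6 = coeff (pencil_det Q1 Q2 Q3) 0"
  "coeff (pencil_det Q3 Q2 Q1) 5 = coeff (pencil_det Q1 Q2 Q3) 1"
  unfolding pencil_det_def det_3
  by (simp_all add: coeff_mult numeral_eq_Suc atMost_Suc algebra_simps)

lemma X_smooth_reverse: "X_smooth Q3 Q2 Q1 \<longleftrightarrow> X_smooth Q1 Q2 Q3"
  by (auto simp: X_smooth_def chart_z1_eq_pencil_det chart_x1_eq_pencil_det)

section \<open>Smoothness and separability\<close>

lemma affine_dc_smooth_no_common_root:
  "affine_dc_smooth p \<Longrightarrow> poly p t = 0 \<Longrightarrow> poly (pderiv p) t \<noteq> 0"
  unfolding affine_dc_smooth_def by (metis add_0 mult_zero_right zero_power2)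

lemma affine_dc_smoothI:
  fixes p :: "'K::field poly"
  assumes "(2::'K) \<noteq> 0" and "\<And>t. poly p t = 0 \<Longrightarrow> poly (pderiv p) t \<noteq> 0"
  shows "affine_dc_smooth p"
  using assms unfolding affine_dc_smooth_def by auto

(* The coefficient fields are arbitrary here, so the library gcd of polynomials
   (which needs the class field_gcd) is not available. *)
lemma poly_common_divisor_combination:
  fixes p q :: "'a::field poly"
  shows "\<exists>g u v. g = u * p + v * q \<and> g dvd p \<and> g dvd q"
proof (induction "degree q" arbitrary: p q rule: less_induct)
  case less
  consider "q = 0" | "q dvd p" | "q \<noteq> 0" "p mod q \<noteq> 0"
    by fastforce
  then show ?case
  proof cases
    case 1
    then show ?thesis by (intro exI[of _ p] exI[of _ 1] exI[of _ 0]) simp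
  next
    case 2
    then show ?thesis by (intro exI[of _ q] exI[of _ 0] exI[of _ 1]) simp
  next
    case 3
    then have "degree (p mod q) < degree q" by (rule degree_mod_less')
    from less[OF this] obtain g u v
      where g: "g = u * q + v * (p mod q)" "g dvd q" "g dvd p mod q" by blast
    have "g = v * p + (u - v * (p div q)) * q"
      using g(1) by (simp add: minus_div_mult_eq_mod [symmetric] algebra_simps)
    moreover have "g dvd p div q * q + p mod q"
      using g(2,3) by (intro dvd_add dvd_mult)
    then have "g dvd p" by (simp only: div_mult_mod_eq)
    ultimately show ?thesis using g(2) by blast
  qed
qed

lemma coprime_poly_bezout:
  fixes p q :: "'a::field poly"
  assumes "coprime p q"
  shows "\<exists>u v. u * p + v * q = 1"
proof -
  obtain g u v where g: "g = u * p + v * q" "g dvd p" "g dvd q"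
    using poly_common_divisor_combination by blast
  then obtain w where "g * w = 1"
    using assms coprime_common_divisor by (metis dvdE)
  then have "(w * u) * p + (w * v) * q = 1"
    using g(1) by (simp add: algebra_simps)
  then show ?thesis by blast
qed

lemma coprime_pderiv_if_affine_dc_smooth:
  fixes p :: "'a::field poly" and h :: "'a \<Rightarrow> 'K::field"
  assumes h: "field_hom h" and closed: "alg_closed_type TYPE('K)"
    and smooth: "affine_dc_smooth (map_poly h p)"
  shows "coprime p (pderiv p)"
proof (rule coprimeI)
  interpret idom_hom h using h by (rule idom_hom_if_field_hom)
  fix g assume g: "g dvd p" "g dvd pderiv p"
  have "p \<noteq> 0"
    using affine_dc_smooth_no_common_root[OF smooth, of 0] by auto
  then have "g \<noteq> 0" using g(1) by auto
  show "is_unit g"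
  proof (rule ccontr)
    assume "\<not> is_unit g"
    then have "degree (map_poly h g) > 0"
      using is_unit_iff_degree[OF \<open>g \<noteq> 0\<close>] by (simp add: degree_map_poly_field_hom[OF h])
    then obtain t where t: "poly (map_poly h g) t = 0"
      using closed unfolding alg_closed_type_def by blast
    obtain u v where u: "p = g * u" and v: "pderiv p = g * v"
      using g by (meson dvdE)
    have "poly (map_poly h p) t = 0"
      unfolding u map_poly_mult using t by simp
    moreover have "poly (pderiv (map_poly h p)) t = 0"
      unfolding map_poly_pderiv [symmetric] v map_poly_mult using t by simp
    ultimately show False using affine_dc_smooth_no_common_root[OF smooth] by blast
  qed
qed

lemma affine_dc_smooth_if_coprime_pderiv:
  fixes p :: "'a::field poly" and h :: "'a \<Rightarrow> 'K::field"
  assumes h: "field_hom h" and two: "(2::'a) \<noteq> 0" and coprime: "coprime p (pderiv p)"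
  shows "affine_dc_smooth (map_poly h p)"
proof (rule affine_dc_smoothI)
  interpret idom_hom h using h by (rule idom_hom_if_field_hom)
  show "(2::'K) \<noteq> 0"
    using two field_hom_eq_0_iff[OF h, of 2] by (simp add: hom_numeral)
  obtain u v where uv: "u * p + v * pderiv p = 1"
    using coprime_poly_bezout[OF coprime] by blast
  have "map_poly h (u * p + v * pderiv p) = 1"
    unfolding uv by (simp add: hom_1)
  then have bezout: "map_poly h u * map_poly h p + map_poly h v * pderiv (map_poly h p) = 1"
    by (simp only: map_poly_add map_poly_mult map_poly_pderiv)
  show "poly (pderiv (map_poly h p)) t \<noteq> 0" if "poly (map_poly h p) t = 0" for t
  proof
    assume "poly (pderiv (map_poly h p)) t = 0"
    then have "poly (map_poly h u * map_poly h p + map_poly h v * pderiv (map_poly h p)) t = 0"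
      using that by simp
    then show False
      unfolding bezout by simp
  qed
qed

lemma degree_chart_z1_ge_if_X_smooth:
  assumes "X_smooth Q1 Q2 Q3"
  shows "5 \<le> degree (chart_z1 Q1 Q2 Q3)"
proof -
  have "coeff (chart_x1 Q1 Q2 Q3) 0 \<noteq> 0 \<or> coeff (chart_x1 Q1 Q2 Q3) 1 \<noteq> 0"
    using affine_dc_smooth_no_common_root[of "chart_x1 Q1 Q2 Q3" 0] assms
    by (auto simp: X_smooth_def poly_0_coeff_0 coeff_pderiv)
  then have "coeff (chart_z1 Q1 Q2 Q3) 6 \<noteq> 0 \<or> coeff (chart_z1 Q1 Q2 Q3) 5 \<noteq> 0"
    by (simp add: chart_x1_eq_pencil_det chart_z1_eq_pencil_det coeff_pencil_det_reverse)
  then show ?thesis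
    using le_degree by fastforce
qed

lemma X_connected_if_X_smooth:
  fixes Q1 Q2 Q3 :: "'K::field^3^3"
  assumes closed: "alg_closed_type TYPE('K)" and smooth: "X_smooth Q1 Q2 Q3"
  shows "X_connected Q1 Q2 Q3"
  unfolding X_connected_def
proof
  assume "\<exists>G. - chart_z1 Q1 Q2 Q3 = G^2"
  then obtain G where G: "chart_z1 Q1 Q2 Q3 = - (G * G)"
    by (metis minus_equation_iff power2_eq_square)
  show False
  proof (cases "degree G = 0")
    case True
    then have "degree (chart_z1 Q1 Q2 Q3) = 0"
      using G degree_mult_le[of G G] by simp
    then show False using degree_chart_z1_ge_if_X_smooth[OF smooth] by simp
  next
    case False
    then obtain t where "poly G t = 0"
      using closed by (auto simp: alg_closed_type_def)
    then show False
      using smooth affine_dc_smooth_no_common_root[of "chart_z1 Q1 Q2 Q3" t]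
      by (simp add: G X_smooth_def pderiv_mult pderiv_minus)
  qed
qed

section \<open>The special fibre\<close>

lemma not_quartic_C_smooth_at:
  fixes F2 F1 F0 H2 H1 H0 G2 G1 G0 x :: "'K::field"
  assumes "bq F2 F1 F0 x 1 * bq G2 G1 G0 x 1 = 0"
    and "(2*F2*x + F1) * bq G2 G1 G0 x 1 + bq F2 F1 F0 x 1 * (2*G2*x + G1) = 0"
    and "(F1*x + 2*F0) * bq G2 G1 G0 x 1 + bq F2 F1 F0 x 1 * (G1*x + 2*G0) = 0"
  shows "\<not> quartic_C_smooth F2 F1 F0 H2 H1 H0 G2 G1 G0"
  unfolding quartic_C_smooth_def Let_def not_not
  by (rule exI[of _ x], rule exI[of _ 0], rule exI[of _ 1]) (use assms in simp)

lemma not_curve_D_smooth_at: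
  fixes F2 F1 F0 H2 H1 H0 G2 G1 G0 x y :: "'K::field"
  assumes "y^2 - bq H2 H1 H0 x 1 * y + bq F2 F1 F0 x 1 * bq G2 G1 G0 x 1 = 0"
    and "- (2*H2*x + H1) * y + (2*F2*x + F1) * bq G2 G1 G0 x 1 + bq F2 F1 F0 x 1 * (2*G2*x + G1) = 0"
    and "2 * y - bq H2 H1 H0 x 1 = 0"
    and "- (H1*x + 2*H0) * y + (F1*x + 2*F0) * bq G2 G1 G0 x 1 + bq F2 F1 F0 x 1 * (G1*x + 2*G0) = 0"
  shows "\<not> curve_D_smooth F2 F1 F0 H2 H1 H0 G2 G1 G0"
  unfolding curve_D_smooth_def Let_def not_not
  by (rule exI[of _ x], rule exI[of _ y], rule exI[of _ 1])
    (use assms in \<open>simp add: algebra_simps\<close>)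

lemma quartic_C_smooth_swap:
  "quartic_C_smooth F0 F1 F2 H0 H1 H2 G0 G1 G2 \<longleftrightarrow> quartic_C_smooth F2 F1 F0 H2 H1 H0 G2 G1 G0"
  unfolding quartic_C_smooth_def Let_def bq_def
  by (intro arg_cong[where f = Not] iffI; elim exE; rule_tac x = z in exI,
      rule_tac x = y in exI, rule_tac x = x in exI; force simp: algebra_simps)

lemma curve_D_smooth_swap:
  "curve_D_smooth F0 F1 F2 H0 H1 H2 G0 G1 G2 \<longleftrightarrow> curve_D_smooth F2 F1 F0 H2 H1 H0 G2 G1 G0"
  unfolding curve_D_smooth_def Let_def bq_def
  by (intro arg_cong[where f = Not] iffI; elim exE; rule_tac x = z in exI,
      rule_tac x = y in exI, rule_tac x = x in exI; force simp: algebra_simps)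

lemma product_double_zero_from_pencil:
  fixes a c a' c' f fx fz g gx gz :: "'K::field"
  assumes "a*f + c*g = 0" "a*fx + c*gx = 0" "a*fz + c*gz = 0" "a \<noteq> 0 \<or> c \<noteq> 0"
    and "a \<noteq> 0 \<Longrightarrow> c \<noteq> 0 \<Longrightarrow> a'*f + c'*g = 0 \<and> a*c' \<noteq> a'*c"
  shows "f*g = 0 \<and> fx*g + f*gx = 0 \<and> fz*g + f*gz = 0"
proof -
  consider "a = 0" | "c = 0" | "a \<noteq> 0" "c \<noteq> 0" by blast
  then show ?thesis
  proof cases
    case 3
    then have "a'*f + c'*g = 0" "a*c' \<noteq> a'*c" using assms(5) by blast+
    then have "(a*c' - a'*c) * f = 0" "(a*c' - a'*c) * g = 0"
      using assms(1) by algebra+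
    then show ?thesis using \<open>a*c' \<noteq> a'*c\<close> by simp
  qed (use assms in auto)
qed

(* With U = c y + b f and a c = b^2 one has
   c^2 (y^2 - h y + f g) = U^2 - U (2 b f + c h) + c f (a f + b h + c g); take U = 0. *)
lemma conic_point_from_pencil:
  fixes a b c f fx fz g gx gz h hx hz :: "'K::field"
  assumes "a*c = b^2" "c \<noteq> 0"
    and "a*f + b*h + c*g = 0" "a*fx + b*hx + c*gx = 0" "a*fz + b*hz + c*gz = 0"
    and "2*b*f + c*h = 0"
  obtains y where "y^2 - h*y + f*g = 0" "- hx*y + fx*g + f*gx = 0" "2*y - h = 0"
    "- hz*y + fz*g + f*gz = 0"
proof
  define y where "y = - b * f / c"
  have y: "c * y = - b * f" using assms(2) by (simp add: y_def)
  have "c^2 * (y^2 - h*y + f*g) = 0" "c^2 * (- hx*y + fx*g + f*gx) = 0" "c * (2*y - h) = 0"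
    "c^2 * (- hz*y + fz*g + f*gz) = 0"
    using assms y by algebra+
  then show "y^2 - h*y + f*g = 0" "- hx*y + fx*g + f*gx = 0" "2*y - h = 0" "- hz*y + fz*g + f*gz = 0"
    using assms(2) by simp_all
qed

lemma pencil_tangent_not_proportional:
  fixes F2 F1 H2 H1 G2 G1 t a b c a' b' c' l m :: "'K::field"
  assumes "(2::'K) \<noteq> 0"
    and "a*F2 + b*H2 + c*G2 = 1" "a*F1 + b*H1 + c*G1 = 2*t"
    and "a'*F2 + b'*H2 + c'*G2 = 0" "a'*F1 + b'*H1 + c'*G1 = 2"
    and "l \<noteq> 0" "l*a' = m*a" "l*b' = m*b" "l*c' = m*c"
  shows False
proof -
  have "l * 2 = 0"
    using assms(2-5,7-9) by algebra
  then show False using assms(1,6) by simp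
qed

(* The hypotheses say a f + b h + c g = (x + t z)^2 and a' f + b' h + c' g = 2 z (x + t z)
   as binary forms, evaluated at (x : z) = (-t : 1) below. *)
lemma singular_point_if_pencil_double_root:
  fixes F2 F1 F0 H2 H1 H0 G2 G1 G0 t a b c a' b' c' :: "'K::field"
  assumes two: "(2::'K) \<noteq> 0"
    and C1: "a*F2 + b*H2 + c*G2 = 1" and C2: "a*F1 + b*H1 + c*G1 = 2*t"
    and C3: "a*F0 + b*H0 + c*G0 = t^2"
    and D1: "a'*F2 + b'*H2 + c'*G2 = 0" and D2: "a'*F1 + b'*H1 + c'*G1 = 2"
    and D3: "a'*F0 + b'*H0 + c'*G0 = 2*t"
    and P: "b*(a*c - b^2) = 0" and P': "b'*(a*c - b^2) + b*(a'*c + a*c' - 2*b*b') = 0"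
  shows "\<not> quartic_C_smooth F2 F1 F0 H2 H1 H0 G2 G1 G0
    \<or> \<not> curve_D_smooth F2 F1 F0 H2 H1 H0 G2 G1 G0"
proof -
  define x where "x = - t"
  define f fx fz where f_def: "f = bq F2 F1 F0 x 1" and fx_def: "fx = 2*F2*x + F1"
    and fz_def: "fz = F1*x + 2*F0"
  define h hx hz where h_def: "h = bq H2 H1 H0 x 1" and hx_def: "hx = 2*H2*x + H1"
    and hz_def: "hz = H1*x + 2*H0"
  define g gx gz where g_def: "g = bq G2 G1 G0 x 1" and gx_def: "gx = 2*G2*x + G1"
    and gz_def: "gz = G1*x + 2*G0"
  have pencil: "a*f + b*h + c*g = 0" "a*fx + b*hx + c*gx = 0" "a*fz + b*hz + c*gz = 0"
    "a'*f + b'*h + c'*g = 0"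
    using C1 C2 C3 D1 D2 D3
    unfolding f_def fx_def fz_def h_def hx_def hz_def g_def gx_def gz_def bq_def x_def
      power2_eq_square
    by algebra+
  note independent = pencil_tangent_not_proportional[OF two C1 C2 D1 D2]
  show ?thesis
  proof (cases "b = 0")
    case True
    have "a \<noteq> 0 \<or> c \<noteq> 0" using C1 True by auto
    moreover have "a'*f + c'*g = 0 \<and> a*c' \<noteq> a'*c" if "a \<noteq> 0" "c \<noteq> 0"
    proof
      have "b' = 0" using P' True that by simp
      then show "a'*f + c'*g = 0" using pencil(4) by simp
      show "a*c' \<noteq> a'*c"
        using independent[of a a'] that True \<open>b' = 0\<close> by (auto simp: ac_simps)
    qed
    ultimately have "f*g = 0 \<and> fx*g + f*gx = 0 \<and> fz*g + f*gz = 0"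
      using product_double_zero_from_pencil[of a f c g fx gx fz gz a' c'] pencil True by simp
    then show ?thesis
      using not_quartic_C_smooth_at[of F2 F1 F0 x G2 G1 G0]
      unfolding f_def g_def fx_def gx_def fz_def gz_def by auto
  next
    case False
    then have conic: "a*c = b^2" using P by simp
    then have "c \<noteq> 0" using False by auto
    have tangent: "a'*c + a*c' = 2*b*b'" using P' conic False by simp
    have "(b'*c - c'*b) * (2*b*f + c*h) = 0"
      using pencil(1,4) conic tangent by algebra
    moreover have "b'*c \<noteq> c'*b"
    proof
      assume "b'*c = c'*b"
      moreover have "c * (a'*c - c'*a) = 0"
        using calculation conic tangent by algebra
      ultimately show False
        using independent[of c c'] \<open>c \<noteq> 0\<close> by (simp add: ac_simps)
    qed
    ultimately have "2*b*f + c*h = 0" by simp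
    then obtain y where "y^2 - h*y + f*g = 0" "- hx*y + fx*g + f*gx = 0" "2*y - h = 0"
      "- hz*y + fz*g + f*gz = 0"
      using conic_point_from_pencil[OF conic \<open>c \<noteq> 0\<close> pencil(1-3)] by blast
    then show ?thesis
      using not_curve_D_smooth_at[of y H2 H1 H0 x F2 F1 F0 G2 G1 G0]
      unfolding f_def g_def h_def fx_def gx_def hx_def fz_def gz_def hz_def by auto
  qed
qed

lemma matrix_vector_mult_vector_3:
  fixes M :: "'a::semiring_1^3^3"
  shows "M *v vector [x1, x2, x3] =
    vector [M$1$1 * x1 + M$1$2 * x2 + M$1$3 * x3, M$2$1 * x1 + M$2$2 * x2 + M$2$3 * x3,
      M$3$1 * x1 + M$3$2 * x2 + M$3$3 * x3]"
  unfolding vec_eq_iff forall_3 matrix_vector_mult_def sum_3 by simp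

lemma pencil_entries_eq:
  fixes F2 F1 F0 H2 H1 H0 G2 G1 G0 :: "'K::field" and Q1 Q2 Q3 E1 E2 E3 R :: "'K^3^3"
  defines "A \<equiv> vector [vector [F2, F1, F0], vector [H2, H1, H0], vector [G2, G1, G0]] :: 'K^3^3"
  assumes R: "R ** A = mat 1"
    and e1: "smat F2 Q1 + smat F1 Q2 + smat F0 Q3 = E1"
    and e2: "smat H2 Q1 + smat H1 Q2 + smat H0 Q3 = E2"
    and e3: "smat G2 Q1 + smat G1 Q2 + smat G0 Q3 = E3"
  shows "Q1$r$s = R$1$1 * E1$r$s + R$1$2 * E2$r$s + R$1$3 * E3$r$s"
    and "Q2$r$s = R$2$1 * E1$r$s + R$2$2 * E2$r$s + R$2$3 * E3$r$s"
    and "Q3$r$s = R$3$1 * E1$r$s + R$3$2 * E2$r$s + R$3$3 * E3$r$s"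
proof -
  have "F2 * Q1$r$s + F1 * Q2$r$s + F0 * Q3$r$s = E1$r$s"
    "H2 * Q1$r$s + H1 * Q2$r$s + H0 * Q3$r$s = E2$r$s"
    "G2 * Q1$r$s + G1 * Q2$r$s + G0 * Q3$r$s = E3$r$s"
    using arg_cong[OF e1, of "\<lambda>M. M$r$s"] arg_cong[OF e2, of "\<lambda>M. M$r$s"]
      arg_cong[OF e3, of "\<lambda>M. M$r$s"]
    by (simp_all add: smat_def)
  then have Av: "A *v vector [Q1$r$s, Q2$r$s, Q3$r$s] = vector [E1$r$s, E2$r$s, E3$r$s]"
    unfolding matrix_vector_mult_vector_3 by (simp add: A_def)
  have "vector [Q1$r$s, Q2$r$s, Q3$r$s] = R *v (A *v vector [Q1$r$s, Q2$r$s, Q3$r$s])"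
    by (simp add: matrix_vector_mul_assoc R)
  also have "\<dots> = R *v vector [E1$r$s, E2$r$s, E3$r$s]"
    by (simp only: Av)
  finally have "vector [Q1$r$s, Q2$r$s, Q3$r$s] = (vector
      [R$1$1 * E1$r$s + R$1$2 * E2$r$s + R$1$3 * E3$r$s,
       R$2$1 * E1$r$s + R$2$2 * E2$r$s + R$2$3 * E3$r$s,
       R$3$1 * E1$r$s + R$3$2 * E2$r$s + R$3$3 * E3$r$s] :: 'K^3)"
    unfolding matrix_vector_mult_vector_3 .
  then show "Q1$r$s = R$1$1 * E1$r$s + R$1$2 * E2$r$s + R$1$3 * E3$r$s"
    "Q2$r$s = R$2$1 * E1$r$s + R$2$2 * E2$r$s + R$2$3 * E3$r$s"
    "Q3$r$s = R$3$1 * E1$r$s + R$3$2 * E2$r$s + R$3$3 * E3$r$s"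
    unfolding vec_eq_iff forall_3 vector_3 by blast+
qed

lemma det_pencil_of_forms:
  fixes a b c :: "'K::field poly"
  assumes "(2::'K) \<noteq> 0"
  shows "det (\<chi> r s. smult (qmat 0 0 0 1 0 0 $r$s) a + smult (qmat 0 1 0 0 1 0 $r$s) b
      + smult (qmat 0 0 0 0 0 1 $r$s) c) = smult (1/4) (b * (a * c - b^2))"
proof -
  have "2 * [:1/2:] = (1 :: 'K poly)"
    using assms by (simp add: numeral_poly)
  then have "det (vector [vector [0, [:1/2:] * a, [:1/2:] * b],
      vector [[:1/2:] * a, b, [:1/2:] * c], vector [[:1/2:] * b, [:1/2:] * c, 0]] :: 'K poly^3^3)
    = [:1/2:] * [:1/2:] * (b * (a * c - b^2))"
    unfolding det_3 vector_3 power2_eq_square by algebra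
  moreover have "(\<chi> r s. smult (qmat 0 0 0 1 0 0 $r$s) a + smult (qmat 0 1 0 0 1 0 $r$s) b
      + smult (qmat 0 0 0 0 0 1 $r$s) c) = (vector [vector [0, [:1/2:] * a, [:1/2:] * b],
      vector [[:1/2:] * a, b, [:1/2:] * c], vector [[:1/2:] * b, [:1/2:] * c, 0]] :: 'K poly^3^3)"
    by (simp add: vec_eq_iff forall_3 qmat_def)
  ultimately show ?thesis by simp
qed

(* Q1 + 2 x Q2 + x^2 Q3 = a E_1 + b E_2 + c E_3 with E_1, E_2, E_3 the matrices of x1 x2,
   x2^2 + x1 x3, x2 x3 and (a, b, c) = (1, 2x, x^2) A^-1. *)
lemma chart_z1_pencil_of_forms:
  fixes F2 F1 F0 H2 H1 H0 G2 G1 G0 :: "'K::field" and Q1 Q2 Q3 :: "'K^3^3"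
  assumes two: "(2::'K) \<noteq> 0"
    and A: "det (vector [vector [F2, F1, F0], vector [H2, H1, H0], vector [G2, G1, G0]]
                 :: 'K^3^3) \<noteq> 0"
    and e1: "smat F2 Q1 + smat F1 Q2 + smat F0 Q3 = qmat 0 0 0 1 0 0"
    and e2: "smat H2 Q1 + smat H1 Q2 + smat H0 Q3 = qmat 0 1 0 0 1 0"
    and e3: "smat G2 Q1 + smat G1 Q2 + smat G0 Q3 = qmat 0 0 0 0 0 1"
  obtains a b c :: "'K poly"
  where "chart_z1 Q1 Q2 Q3 = smult (1/4) (b * (a * c - b^2))"
    and "smult F2 a + smult H2 b + smult G2 c = 1"
    and "smult F1 a + smult H1 b + smult G1 c = [:0, 2:]"
    and "smult F0 a + smult H0 b + smult G0 c = [:0, 0, 1:]"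
proof -
  define A :: "'K^3^3"
    where "A = vector [vector [F2, F1, F0], vector [H2, H1, H0], vector [G2, G1, G0]]"
  obtain R :: "'K^3^3" where R: "R ** A = mat 1"
    using A invertible_det_nz invertible_left_inverse unfolding A_def by blast
  define a b c where "a = [:R$1$1, 2 * R$2$1, R$3$1:]" and "b = [:R$1$2, 2 * R$2$2, R$3$2:]"
    and "c = [:R$1$3, 2 * R$2$3, R$3$3:]"
  note Q = pencil_entries_eq[OF R[unfolded A_def] e1 e2 e3]
  have "chart_z1 Q1 Q2 Q3 = det (\<chi> r s. smult (qmat 0 0 0 1 0 0 $r$s) a
      + smult (qmat 0 1 0 0 1 0 $r$s) b + smult (qmat 0 0 0 0 0 1 $r$s) c)"
    unfolding chart_z1_def
    by (rule arg_cong[of _ _ det]) (simp add: vec_eq_iff Q a_def b_def c_def algebra_simps)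
  then have "chart_z1 Q1 Q2 Q3 = smult (1/4) (b * (a * c - b^2))"
    using det_pencil_of_forms[OF two] by simp
  moreover have RA: "R$i$1 * A$1$j + R$i$2 * A$2$j + R$i$3 * A$3$j = mat 1 $i$j" for i j
    using arg_cong[OF R, of "\<lambda>M. M$i$j"] by (simp add: matrix_matrix_mult_def sum_3)
  have "smult F2 a + smult H2 b + smult G2 c = 1"
    using RA[of 1 1] RA[of 2 1] RA[of 3 1]
    by (simp add: a_def b_def c_def A_def mat_def one_pCons algebra_simps; algebra)
  moreover have "smult F1 a + smult H1 b + smult G1 c = [:0, 2:]"
    using RA[of 1 2] RA[of 2 2] RA[of 3 2]
    by (simp add: a_def b_def c_def A_def mat_def algebra_simps; algebra)
  moreover have "smult F0 a + smult H0 b + smult G0 c = [:0, 0, 1:]"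
    using RA[of 1 3] RA[of 2 3] RA[of 3 3]
    by (simp add: a_def b_def c_def A_def mat_def algebra_simps; algebra)
  ultimately show ?thesis using that by blast
qed

lemma affine_dc_smooth_chart_z1_if_C_D_smooth:
  fixes F2 F1 F0 H2 H1 H0 G2 G1 G0 :: "'K::field" and Q1 Q2 Q3 :: "'K^3^3"
  assumes two: "(2::'K) \<noteq> 0"
    and C: "quartic_C_smooth F2 F1 F0 H2 H1 H0 G2 G1 G0"
    and D: "curve_D_smooth F2 F1 F0 H2 H1 H0 G2 G1 G0"
    and A: "det (vector [vector [F2, F1, F0], vector [H2, H1, H0], vector [G2, G1, G0]]
                 :: 'K^3^3) \<noteq> 0"
    and e1: "smat F2 Q1 + smat F1 Q2 + smat F0 Q3 = qmat 0 0 0 1 0 0"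
    and e2: "smat H2 Q1 + smat H1 Q2 + smat H0 Q3 = qmat 0 1 0 0 1 0"
    and e3: "smat G2 Q1 + smat G1 Q2 + smat G0 Q3 = qmat 0 0 0 0 0 1"
  shows "affine_dc_smooth (chart_z1 Q1 Q2 Q3)"
proof -
  obtain a b c where P: "chart_z1 Q1 Q2 Q3 = smult (1/4) (b * (a * c - b^2))"
    and w1: "smult F2 a + smult H2 b + smult G2 c = 1"
    and w2: "smult F1 a + smult H1 b + smult G1 c = [:0, 2:]"
    and w3: "smult F0 a + smult H0 b + smult G0 c = [:0, 0, 1:]"
    using chart_z1_pencil_of_forms[OF two A e1 e2 e3] by blast
  have four: "(4::'K) \<noteq> 0"
    using two by (metis mult_2_right mult_eq_0_iff numeral_Bit0)
  show ?thesis
  proof (rule affine_dc_smoothI[OF two])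
    fix t
    define a' b' c' where "a' = pderiv a" and "b' = pderiv b" and "c' = pderiv c"
    have pencil: "poly a t * F2 + poly b t * H2 + poly c t * G2 = 1"
      "poly a t * F1 + poly b t * H1 + poly c t * G1 = 2 * t"
      "poly a t * F0 + poly b t * H0 + poly c t * G0 = t^2"
      using arg_cong[OF w1, of "\<lambda>p. poly p t"] arg_cong[OF w2, of "\<lambda>p. poly p t"]
        arg_cong[OF w3, of "\<lambda>p. poly p t"]
      by (simp_all add: ac_simps power2_eq_square)
    have tangent: "poly a' t * F2 + poly b' t * H2 + poly c' t * G2 = 0"
      "poly a' t * F1 + poly b' t * H1 + poly c' t * G1 = 2"
      "poly a' t * F0 + poly b' t * H0 + poly c' t * G0 = 2 * t"
      using arg_cong[OF w1, of "\<lambda>p. poly (pderiv p) t"]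
        arg_cong[OF w2, of "\<lambda>p. poly (pderiv p) t"] arg_cong[OF w3, of "\<lambda>p. poly (pderiv p) t"]
      by (simp_all add: a'_def b'_def c'_def pderiv_add pderiv_smult pderiv_pCons ac_simps)
    assume "poly (chart_z1 Q1 Q2 Q3) t = 0"
    then have root: "poly b t * (poly a t * poly c t - (poly b t)^2) = 0"
      using four unfolding P by simp
    show "poly (pderiv (chart_z1 Q1 Q2 Q3)) t \<noteq> 0"
    proof
      assume "poly (pderiv (chart_z1 Q1 Q2 Q3)) t = 0"
      then have "poly b' t * (poly a t * poly c t - (poly b t)^2) + poly b t *
          (poly a' t * poly c t + poly a t * poly c' t - 2 * poly b t * poly b' t) = 0"
        using four unfolding P pderiv_smult
        by (simp add: a'_def b'_def c'_def pderiv_mult pderiv_diff power2_eq_square algebra_simps)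
      then show False
        using singular_point_if_pencil_double_root[OF two pencil tangent root] C D by blast
    qed
  qed
qed

lemma X_smooth_if_C_D_smooth:
  fixes F2 F1 F0 H2 H1 H0 G2 G1 G0 :: "'K::field" and Q1 Q2 Q3 :: "'K^3^3"
  assumes two: "(2::'K) \<noteq> 0"
    and C: "quartic_C_smooth F2 F1 F0 H2 H1 H0 G2 G1 G0"
    and D: "curve_D_smooth F2 F1 F0 H2 H1 H0 G2 G1 G0"
    and A: "det (vector [vector [F2, F1, F0], vector [H2, H1, H0], vector [G2, G1, G0]]
                 :: 'K^3^3) \<noteq> 0"
    and e1: "smat F2 Q1 + smat F1 Q2 + smat F0 Q3 = qmat 0 0 0 1 0 0"
    and e2: "smat H2 Q1 + smat H1 Q2 + smat H0 Q3 = qmat 0 1 0 0 1 0"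
    and e3: "smat G2 Q1 + smat G1 Q2 + smat G0 Q3 = qmat 0 0 0 0 0 1"
  shows "X_smooth Q1 Q2 Q3"
proof -
  have "affine_dc_smooth (chart_z1 Q3 Q2 Q1)"
  proof (rule affine_dc_smooth_chart_z1_if_C_D_smooth[OF two])
    show "quartic_C_smooth F0 F1 F2 H0 H1 H2 G0 G1 G2"
      using C by (simp add: quartic_C_smooth_swap)
    show "curve_D_smooth F0 F1 F2 H0 H1 H2 G0 G1 G2"
      using D by (simp add: curve_D_smooth_swap)
    have "det (vector [vector [F0, F1, F2], vector [H0, H1, H2], vector [G0, G1, G2]] :: 'K^3^3) =
        - det (vector [vector [F2, F1, F0], vector [H2, H1, H0], vector [G2, G1, G0]] :: 'K^3^3)"
      by (simp add: det_3 algebra_simps)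
    then show "det (vector [vector [F0, F1, F2], vector [H0, H1, H2], vector [G0, G1, G2]]
        :: 'K^3^3) \<noteq> 0"
      using A by simp
    show "smat F0 Q3 + smat F1 Q2 + smat F2 Q1 = qmat 0 0 0 1 0 0"
      "smat H0 Q3 + smat H1 Q2 + smat H2 Q1 = qmat 0 1 0 0 1 0"
      "smat G0 Q3 + smat G1 Q2 + smat G2 Q1 = qmat 0 0 0 0 0 1"
      using e1 e2 e3 by (simp_all add: ac_simps)
  qed
  then show ?thesis
    using affine_dc_smooth_chart_z1_if_C_D_smooth[OF assms]
    by (simp add: X_smooth_def chart_x1_eq_pencil_det chart_z1_eq_pencil_det)
qed

lemma X_smooth_special_fibre:
  fixes f2 f1 f0 h2 h1 h0 g2 g1 g0 :: "'a::field" and q1 q2 q3 :: "'a^3^3"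
    and \<phi> :: "'a \<Rightarrow> 'K::field"
  assumes \<phi>: "field_hom \<phi>" and two: "(2::'a) \<noteq> 0"
    and C: "quartic_C_smooth (\<phi> f2) (\<phi> f1) (\<phi> f0) (\<phi> h2) (\<phi> h1) (\<phi> h0) (\<phi> g2) (\<phi> g1) (\<phi> g0)"
    and D: "curve_D_smooth (\<phi> f2) (\<phi> f1) (\<phi> f0) (\<phi> h2) (\<phi> h1) (\<phi> h0) (\<phi> g2) (\<phi> g1) (\<phi> g0)"
    and A: "det (vector [vector [f2, f1, f0], vector [h2, h1, h0], vector [g2, g1, g0]]
                 :: 'a^3^3) \<noteq> 0"
    and e1: "smat f2 q1 + smat f1 q2 + smat f0 q3 = qmat 0 0 0 1 0 0"
    and e2: "smat h2 q1 + smat h1 q2 + smat h0 q3 = qmat 0 1 0 0 1 0"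
    and e3: "smat g2 q1 + smat g1 q2 + smat g0 q3 = qmat 0 0 0 0 0 1"
  shows "X_smooth (map_mat \<phi> q1) (map_mat \<phi> q2) (map_mat \<phi> q3)"
proof (rule X_smooth_if_C_D_smooth[OF _ C D])
  interpret idom_hom \<phi> using \<phi> by (rule idom_hom_if_field_hom)
  show "(2::'K) \<noteq> 0"
    using two field_hom_eq_0_iff[OF \<phi>, of 2] by (simp add: hom_numeral)
  have "\<phi> (det (vector [vector [f2, f1, f0], vector [h2, h1, h0], vector [g2, g1, g0]] :: 'a^3^3)) =
      det (vector [vector [\<phi> f2, \<phi> f1, \<phi> f0], vector [\<phi> h2, \<phi> h1, \<phi> h0],
        vector [\<phi> g2, \<phi> g1, \<phi> g0]] :: 'K^3^3)"
    by (simp add: det_3 hom_simps)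
  then show "det (vector [vector [\<phi> f2, \<phi> f1, \<phi> f0], vector [\<phi> h2, \<phi> h1, \<phi> h0],
      vector [\<phi> g2, \<phi> g1, \<phi> g0]] :: 'K^3^3) \<noteq> 0"
    using A field_hom_eq_0_iff[OF \<phi>] by metis
  show "smat (\<phi> f2) (map_mat \<phi> q1) + smat (\<phi> f1) (map_mat \<phi> q2) + smat (\<phi> f0) (map_mat \<phi> q3) =
      qmat 0 0 0 1 0 0"
    "smat (\<phi> h2) (map_mat \<phi> q1) + smat (\<phi> h1) (map_mat \<phi> q2) + smat (\<phi> h0) (map_mat \<phi> q3) =
      qmat 0 1 0 0 1 0"
    "smat (\<phi> g2) (map_mat \<phi> q1) + smat (\<phi> g1) (map_mat \<phi> q2) + smat (\<phi> g0) (map_mat \<phi> q3) =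
      qmat 0 0 0 0 0 1"
    using arg_cong[OF e1, of "map_mat \<phi>"] arg_cong[OF e2, of "map_mat \<phi>"]
      arg_cong[OF e3, of "map_mat \<phi>"]
    by (simp_all add: map_mat_smat_sum map_mat_qmat[OF \<phi>] hom_0 hom_1)
qed

section \<open>Reduction of polynomials over Laurent series\<close>

(* For P over k((eps)), fls_poly_val_ge a P says that eps^a divides every coefficient and
   fls_poly_nth n P collects the coefficients of eps^n.  If fls_poly_val_ge 0 P, then P has
   coefficients in k[[eps]] and fls_poly_nth 0 P is its reduction modulo eps. *)
definition fls_poly_nth :: "int \<Rightarrow> 'a::zero fls poly \<Rightarrow> 'a poly" where
  "fls_poly_nth n p = map_poly (\<lambda>c. fls_nth c n) p"

definition fls_poly_val_ge :: "int \<Rightarrow> 'a::zero fls poly \<Rightarrow> bool" where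
  "fls_poly_val_ge a p \<longleftrightarrow> (\<forall>j m. m < a \<longrightarrow> fls_nth (coeff p j) m = 0)"

lemma coeff_fls_poly_nth [simp]: "coeff (fls_poly_nth n p) j = fls_nth (coeff p j) n"
  by (simp add: fls_poly_nth_def coeff_map_poly)

lemma degree_fls_poly_nth_le: "degree (fls_poly_nth n p) \<le> degree p"
  by (rule degree_le) (simp add: coeff_eq_0)

lemma fls_poly_nth_eq_0: "fls_poly_val_ge a p \<Longrightarrow> n < a \<Longrightarrow> fls_poly_nth n p = 0"
  by (rule poly_eqI) (simp add: fls_poly_val_ge_def)

lemma fls_poly_val_ge_mono: "fls_poly_val_ge a p \<Longrightarrow> b \<le> a \<Longrightarrow> fls_poly_val_ge b p"
  by (simp add: fls_poly_val_ge_def)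

lemma fls_poly_nth_pderiv: "fls_poly_nth n (pderiv p) = pderiv (fls_poly_nth n p)"
  for p :: "'a::idom fls poly"
  by (rule poly_eqI) (simp add: coeff_pderiv del: of_nat_Suc)

lemma fls_poly_val_ge_pderiv: "fls_poly_val_ge a p \<Longrightarrow> fls_poly_val_ge a (pderiv p)"
  for p :: "'a::idom fls poly"
  by (simp add: fls_poly_val_ge_def coeff_pderiv del: of_nat_Suc)

lemma fls_nth_mult_low_order:
  fixes x y :: "'a::comm_semiring_1 fls"
  assumes "\<And>m. m < a \<Longrightarrow> fls_nth x m = 0" "\<And>m. m < b \<Longrightarrow> fls_nth y m = 0"
  shows "n < a + b \<Longrightarrow> fls_nth (x * y) n = 0"
    and "fls_nth (x * y) (a + b) = fls_nth x a * fls_nth y b"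
proof -
  consider "x = 0 \<or> y = 0" | "a \<le> fls_subdegree x" "b \<le> fls_subdegree y"
    using fls_subdegree_geI assms by blast
  note cases = this
  show "n < a + b \<Longrightarrow> fls_nth (x * y) n = 0"
    by (cases rule: cases) (auto intro: fls_times_nth_eq0)
  show "fls_nth (x * y) (a + b) = fls_nth x a * fls_nth y b"
  proof (cases rule: cases)
    case 2
    then show ?thesis
      by (cases "a = fls_subdegree x \<and> b = fls_subdegree y")
        (auto simp: fls_times_nth(1) intro: fls_times_nth_eq0)
  qed auto
qed

lemma fls_poly_val_ge_mult:
  fixes p q :: "'a::comm_semiring_1 fls poly"
  assumes "fls_poly_val_ge a p" "fls_poly_val_ge b q"
  shows "fls_poly_val_ge (a + b) (p * q)"
  using assms fls_nth_mult_low_order(1)[of a "coeff p _" b "coeff q _"]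
  by (simp add: fls_poly_val_ge_def coeff_mult fls_nth_sum)

lemma fls_poly_nth_mult:
  fixes p q :: "'a::comm_semiring_1 fls poly"
  assumes "fls_poly_val_ge a p" "fls_poly_val_ge b q"
  shows "fls_poly_nth (a + b) (p * q) = fls_poly_nth a p * fls_poly_nth b q"
  using assms fls_nth_mult_low_order(2)[of a "coeff p _" b "coeff q _"]
  by (intro poly_eqI) (simp add: fls_poly_val_ge_def coeff_mult fls_nth_sum)

lemma fls_poly_valuation_exists:
  fixes p :: "'a::zero fls poly"
  assumes "p \<noteq> 0"
  shows "\<exists>m. fls_poly_val_ge m p \<and> fls_poly_nth m p \<noteq> 0"
proof -
  define S where "S = fls_subdegree ` {c \<in> coeff p ` {..degree p}. c \<noteq> 0}"
  have "finite S" "S \<noteq> {}"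
    using assms by (auto simp: S_def intro!: bexI[of _ "degree p"])
  define m where "m = Min S"
  have "fls_poly_val_ge m p"
    unfolding fls_poly_val_ge_def
  proof (intro allI impI)
    fix j k assume "k < m"
    show "fls_nth (coeff p j) k = 0"
    proof (cases "coeff p j = 0")
      case False
      then have "fls_subdegree (coeff p j) \<in> S"
        by (auto simp: S_def le_degree)
      then have "m \<le> fls_subdegree (coeff p j)"
        using \<open>finite S\<close> by (simp add: m_def)
      then show ?thesis using \<open>k < m\<close> by simp
    qed simp
  qed
  moreover obtain j where "coeff p j \<noteq> 0" "m = fls_subdegree (coeff p j)"
    using Min_in[OF \<open>finite S\<close> \<open>S \<noteq> {}\<close>] by (auto simp: S_def m_def)
  then have "coeff (fls_poly_nth m p) j \<noteq> 0" by simp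
  then have "fls_poly_nth m p \<noteq> 0" by (metis coeff_0)
  ultimately show ?thesis by blast
qed

lemma fls_poly_val_ge_0_factor:
  fixes G H :: "'a::idom fls poly"
  assumes G: "fls_poly_val_ge 0 G" "fls_poly_nth 0 G \<noteq> 0" and GH: "fls_poly_val_ge 0 (G * H)"
  shows "fls_poly_val_ge 0 H"
proof (rule ccontr)
  assume not_integral: "\<not> fls_poly_val_ge 0 H"
  then have "H \<noteq> 0" by (auto simp: fls_poly_val_ge_def)
  then obtain m where m: "fls_poly_val_ge m H" "fls_poly_nth m H \<noteq> 0"
    using fls_poly_valuation_exists by blast
  have "m < 0"
    using not_integral fls_poly_val_ge_mono[OF m(1), of 0] by (meson not_less)
  have "fls_poly_nth 0 G * fls_poly_nth m H = fls_poly_nth (0 + m) (G * H)"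
    using fls_poly_nth_mult[OF G(1) m(1)] by simp
  also have "\<dots> = 0"
    using fls_poly_nth_eq_0[OF GH] \<open>m < 0\<close> by simp
  finally show False using G(2) m(2) by simp
qed

lemma fls_poly_primitive_multiple:
  fixes g :: "'a::field fls poly"
  assumes "g \<noteq> 0"
  obtains c where "c \<noteq> 0" "fls_poly_val_ge 0 (smult c g)" "fls_poly_nth 0 (smult c g) \<noteq> 0"
proof -
  obtain m where m: "fls_poly_val_ge m g" "fls_poly_nth m g \<noteq> 0"
    using fls_poly_valuation_exists[OF assms] by blast
  define c :: "'a fls" where "c = fls_X_intpow (- m)"
  have shift: "fls_nth (c * x) n = fls_nth x (n + m)" for x n
    unfolding c_def fls_X_intpow_times_conv_shift(1) by simp
  have "c \<noteq> 0"
    unfolding c_def by (rule fls_X_intpow_nonzero)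
  moreover have "fls_poly_val_ge 0 (smult c g)"
    using m(1) by (simp add: fls_poly_val_ge_def shift)
  moreover have "fls_poly_nth 0 (smult c g) = fls_poly_nth m g"
    by (rule poly_eqI) (simp add: shift)
  ultimately show ?thesis
    using that m(2) by simp
qed

lemma degree_fls_poly_nth_0_mult_le:
  fixes W V :: "'a::idom fls poly"
  assumes WV: "fls_poly_val_ge 0 (W * V)" "W * V \<noteq> 0"
    and W: "fls_poly_val_ge 0 W" "fls_poly_nth 0 W \<noteq> 0" "degree (fls_poly_nth 0 W) = 0"
  shows "degree (fls_poly_nth 0 (W * V)) + degree W \<le> degree (W * V)"
proof -
  have V: "fls_poly_val_ge 0 V"
    using fls_poly_val_ge_0_factor[OF W(1,2) WV(1)] .
  have "fls_poly_nth 0 (W * V) = fls_poly_nth 0 W * fls_poly_nth 0 V"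
    using fls_poly_nth_mult[OF W(1) V] by simp
  then have "degree (fls_poly_nth 0 (W * V)) \<le> degree V"
    using degree_mult_le[of "fls_poly_nth 0 W" "fls_poly_nth 0 V"] W(3)
      degree_fls_poly_nth_le[of 0 V] by simp
  moreover have "degree (W * V) = degree W + degree V"
    using WV(2) by (simp add: degree_mult_eq)
  ultimately show ?thesis by simp
qed

lemma square_dvd_if_linear_dvd_pderiv:
  fixes g p :: "'a::field poly"
  assumes "degree g = 1" "g dvd p" "g dvd pderiv p"
  shows "g * g dvd p"
proof -
  obtain H where H: "p = g * H" using assms(2) by (elim dvdE)
  have "g dvd pderiv g * H + pderiv H * g"
    using assms(3) unfolding H pderiv_mult by (metis add.commute mult.commute)
  then have "g dvd pderiv g * H"
    by (simp only: dvd_add_times_triv_right_iff)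
  moreover have "is_unit (pderiv g)"
  proof -
    have "g \<noteq> 0" using assms(1) by auto
    then have "coeff (pderiv g) 0 \<noteq> 0"
      using assms(1) leading_coeff_neq_0[of g] by (simp add: coeff_pderiv)
    moreover have "degree (pderiv g) \<le> 0"
      by (rule degree_le) (simp add: coeff_pderiv coeff_eq_0 assms(1) del: of_nat_Suc)
    ultimately show ?thesis
      using is_unit_iff_degree[of "pderiv g"] by fastforce
  qed
  ultimately have "g dvd H" by (simp add: dvd_mult_unit_iff')
  then show ?thesis unfolding H by simp
qed

lemma degree_fls_poly_nth_0_add_2_le:
  fixes P G :: "'a::field fls poly"
  assumes integral: "fls_poly_val_ge 0 P" and "P \<noteq> 0"
    and G: "G dvd P" "G dvd pderiv P" "0 < degree G"
    and G_int: "fls_poly_val_ge 0 G" "fls_poly_nth 0 G \<noteq> 0" "degree (fls_poly_nth 0 G) = 0"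
  shows "degree (fls_poly_nth 0 P) + 2 \<le> degree P"
proof -
  obtain W V where WV: "P = W * V" "2 \<le> degree W"
    and W: "fls_poly_val_ge 0 W" "fls_poly_nth 0 W \<noteq> 0" "degree (fls_poly_nth 0 W) = 0"
  proof (cases "degree G = 1")
    case True
    have "G * G dvd P"
      using square_dvd_if_linear_dvd_pderiv[OF True G(1,2)] .
    then obtain V where "P = (G * G) * V" by (elim dvdE)
    moreover have "fls_poly_nth 0 (G * G) = fls_poly_nth 0 G * fls_poly_nth 0 G"
      using fls_poly_nth_mult[OF G_int(1) G_int(1)] by simp
    moreover have "fls_poly_val_ge 0 (G * G)"
      using fls_poly_val_ge_mult[OF G_int(1) G_int(1)] by simp
    moreover have "degree (G * G) = 2"
      using True by (subst degree_mult_eq) auto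
    ultimately show ?thesis
      using that[of "G * G" V] G_int(2,3) by (simp add: degree_mult_eq)
  next
    case False
    obtain H where "P = G * H" using G(1) by (elim dvdE)
    then show ?thesis
      using that[of G H] False G(3) G_int by simp
  qed
  then show ?thesis
    using degree_fls_poly_nth_0_mult_le[of W V] integral \<open>P \<noteq> 0\<close> by simp
qed

(* A common factor of P and P' can be rescaled to a primitive G; by Gauss' lemma its reduction
   divides P0 and P0', so it is constant, and P0 loses at least two degrees. *)
lemma coprime_pderiv_if_reduction_coprime:
  fixes P :: "'a::field fls poly"
  defines "P0 \<equiv> fls_poly_nth 0 P"
  assumes integral: "fls_poly_val_ge 0 P"
    and coprime: "coprime P0 (pderiv P0)"
    and degree: "degree P \<le> degree P0 + 1"
  shows "coprime P (pderiv P)"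
proof (rule coprimeI)
  fix g assume g: "g dvd P" "g dvd pderiv P"
  have "P0 \<noteq> 0" using coprime by auto
  then have "P \<noteq> 0" by (auto simp: P0_def fls_poly_nth_def)
  then have "g \<noteq> 0" using g(1) by auto
  show "is_unit g"
  proof (rule ccontr)
    assume "\<not> is_unit g"
    then have "degree g > 0"
      using is_unit_iff_degree[OF \<open>g \<noteq> 0\<close>] by simp
    obtain c where c: "c \<noteq> 0" "fls_poly_val_ge 0 (smult c g)" "fls_poly_nth 0 (smult c g) \<noteq> 0"
      using fls_poly_primitive_multiple[OF \<open>g \<noteq> 0\<close>] by blast
    define G where "G = smult c g"
    have G: "G dvd P" "G dvd pderiv P" "0 < degree G"
      using g c(1) \<open>degree g > 0\<close> by (simp_all add: G_def smult_dvd_iff)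
    have G_int: "fls_poly_val_ge 0 G" "fls_poly_nth 0 G \<noteq> 0"
      using c(2,3) by (simp_all add: G_def)
    obtain H H' where H: "P = G * H" and H': "pderiv P = G * H'"
      using G(1,2) by (elim dvdE)
    have "fls_poly_val_ge 0 (G * H)" "fls_poly_val_ge 0 (G * H')"
      using integral fls_poly_val_ge_pderiv[OF integral] by (simp_all flip: H H')
    then have H_int: "fls_poly_val_ge 0 H" "fls_poly_val_ge 0 H'"
      using fls_poly_val_ge_0_factor[OF G_int] by blast+
    have "P0 = fls_poly_nth 0 G * fls_poly_nth 0 H"
      unfolding P0_def H using fls_poly_nth_mult[OF G_int(1) H_int(1)] by simp
    moreover have "pderiv P0 = fls_poly_nth 0 G * fls_poly_nth 0 H'"
      unfolding P0_def fls_poly_nth_pderiv [symmetric] H'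
      using fls_poly_nth_mult[OF G_int(1) H_int(2)] by simp
    ultimately have "is_unit (fls_poly_nth 0 G)"
      using coprime coprime_common_divisor by (metis dvd_triv_left)
    then have "degree (fls_poly_nth 0 G) = 0"
      using is_unit_iff_degree G_int(2) by blast
    then show False
      using degree_fls_poly_nth_0_add_2_le[OF integral \<open>P \<noteq> 0\<close> G G_int] degree
      by (simp add: P0_def)
  qed
qed

section \<open>The generic fibre\<close>

lemma idom_hom_fps_to_fls: "idom_hom (fps_to_fls :: 'a::idom fps \<Rightarrow> 'a fls)"
  by unfold_locales (simp_all add: fls_times_fps_to_fls)

lemma idom_hom_fps_nth_0: "idom_hom (\<lambda>f :: 'a::idom fps. fps_nth f 0)"
  by unfold_locales simp_all

lemma Qeps_eq_map_mat_fps_to_fls: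
  obtains Q where "Qeps q D = map_mat fps_to_fls Q" "map_mat (\<lambda>f. fps_nth f 0) Q = q"
proof
  define Q
    where "Q = (\<chi> i j. fps_const (q$i$j) + fps_X * (fps_const (D$i$j) - fps_const (q$i$j)))"
  show "Qeps q D = map_mat fps_to_fls Q"
    by (simp add: Q_def Qeps_def map_mat_def smat_def vec_eq_iff fls_times_fps_to_fls
        del: fps_const_sub)
  show "map_mat (\<lambda>f. fps_nth f 0) Q = q"
    by (simp add: Q_def map_mat_def vec_eq_iff)
qed

lemma chart_z1_Qeps_reduction:
  fixes q1 q2 q3 D1 D2 D3 :: "'a::field^3^3"
  defines "P \<equiv> chart_z1 (Qeps q1 D1) (Qeps q2 D2) (Qeps q3 D3)"
  shows "fls_poly_val_ge 0 P" and "fls_poly_nth 0 P = chart_z1 q1 q2 q3"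
proof -
  obtain Q1 Q2 Q3
    where Q: "Qeps q1 D1 = map_mat fps_to_fls Q1" "Qeps q2 D2 = map_mat fps_to_fls Q2"
      "Qeps q3 D3 = map_mat fps_to_fls Q3"
      and q: "map_mat (\<lambda>f. fps_nth f 0) Q1 = q1" "map_mat (\<lambda>f. fps_nth f 0) Q2 = q2"
      "map_mat (\<lambda>f. fps_nth f 0) Q3 = q3"
    by (metis Qeps_eq_map_mat_fps_to_fls)
  have P: "P = map_poly fps_to_fls (pencil_det Q1 Q2 Q3)"
    unfolding P_def chart_z1_eq_pencil_det Q
    by (simp add: idom_hom.map_poly_pencil_det[OF idom_hom_fps_to_fls])
  show "fls_poly_val_ge 0 P"
    by (simp add: P fls_poly_val_ge_def coeff_map_poly)
  have "fls_poly_nth 0 P = map_poly (\<lambda>f. fps_nth f 0) (pencil_det Q1 Q2 Q3)"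
    by (rule poly_eqI) (simp add: P coeff_map_poly)
  also have "\<dots> = chart_z1 q1 q2 q3"
    by (simp add: idom_hom.map_poly_pencil_det[OF idom_hom_fps_nth_0] q chart_z1_eq_pencil_det)
  finally show "fls_poly_nth 0 P = chart_z1 q1 q2 q3" .
qed

lemma affine_dc_smooth_chart_z1_Qeps:
  fixes q1 q2 q3 D1 D2 D3 :: "'a::field^3^3" and \<psi> :: "'a fls \<Rightarrow> 'L::field"
  assumes \<psi>: "field_hom \<psi>" and two: "(2::'a) \<noteq> 0"
    and coprime: "coprime (chart_z1 q1 q2 q3) (pderiv (chart_z1 q1 q2 q3))"
    and degree: "5 \<le> degree (chart_z1 q1 q2 q3)"
  shows "affine_dc_smooth (chart_z1 (map_mat \<psi> (Qeps q1 D1)) (map_mat \<psi> (Qeps q2 D2))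
           (map_mat \<psi> (Qeps q3 D3)))"
proof -
  define P where "P = chart_z1 (Qeps q1 D1) (Qeps q2 D2) (Qeps q3 D3)"
  have "degree P \<le> 6"
    unfolding P_def chart_z1_eq_pencil_det by (rule degree_pencil_det_le)
  then have "degree P \<le> degree (chart_z1 q1 q2 q3) + 1"
    using degree by linarith
  then have "coprime P (pderiv P)"
    using coprime_pderiv_if_reduction_coprime chart_z1_Qeps_reduction coprime
    unfolding P_def by metis
  moreover have "(2::'a fls) \<noteq> 0"
    using two fls_nth_numeral'(1)[of "num.Bit0 num.One"] by (metis fls_zero_nth numeral_2_eq_2)
  ultimately have "affine_dc_smooth (map_poly \<psi> P)"
    using affine_dc_smooth_if_coprime_pderiv[OF \<psi>] by blast
  then show ?thesis
    by (simp add: P_def chart_z1_eq_pencil_det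
        idom_hom.map_poly_pencil_det[OF idom_hom_if_field_hom[OF \<psi>]])
qed

lemma affine_dc_smooth_chart_z1_Qeps_if_X_smooth:
  fixes q1 q2 q3 D1 D2 D3 :: "'a::field^3^3"
    and \<phi> :: "'a \<Rightarrow> 'K::field" and \<psi> :: "'a fls \<Rightarrow> 'L::field"
  assumes \<phi>: "field_hom \<phi>" and closed: "alg_closed_type TYPE('K)"
    and special: "X_smooth (map_mat \<phi> q1) (map_mat \<phi> q2) (map_mat \<phi> q3)"
    and \<psi>: "field_hom \<psi>" and two: "(2::'a) \<noteq> 0"
  shows "affine_dc_smooth (chart_z1 (map_mat \<psi> (Qeps q1 D1)) (map_mat \<psi> (Qeps q2 D2))
           (map_mat \<psi> (Qeps q3 D3)))"
proof (rule affine_dc_smooth_chart_z1_Qeps[OF \<psi> two])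
  have "affine_dc_smooth (map_poly \<phi> (chart_z1 q1 q2 q3))"
    using special by (simp add: X_smooth_def chart_z1_map_mat[OF \<phi>])
  then show "coprime (chart_z1 q1 q2 q3) (pderiv (chart_z1 q1 q2 q3))"
    by (rule coprime_pderiv_if_affine_dc_smooth[OF \<phi> closed])
  show "5 \<le> degree (chart_z1 q1 q2 q3)"
    using degree_chart_z1_ge_if_X_smooth[OF special]
    by (simp add: chart_z1_map_mat[OF \<phi>] degree_map_poly_field_hom[OF \<phi>])
qed

lemma X_smooth_generic_fibre:
  fixes q1 q2 q3 D1 D2 D3 :: "'a::field^3^3"
    and \<phi> :: "'a \<Rightarrow> 'K::field" and \<psi> :: "'a fls \<Rightarrow> 'L::field"
  assumes "field_hom \<phi>" "alg_closed_type TYPE('K)"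
    and special: "X_smooth (map_mat \<phi> q1) (map_mat \<phi> q2) (map_mat \<phi> q3)"
    and "field_hom \<psi>" "(2::'a) \<noteq> 0"
  shows "X_smooth (map_mat \<psi> (Qeps q1 D1)) (map_mat \<psi> (Qeps q2 D2)) (map_mat \<psi> (Qeps q3 D3))"
proof -
  have "X_smooth (map_mat \<phi> q3) (map_mat \<phi> q2) (map_mat \<phi> q1)"
    using special by (simp add: X_smooth_reverse)
  then show ?thesis
    using affine_dc_smooth_chart_z1_Qeps_if_X_smooth[OF assms(1,2) special assms(4,5)]
      affine_dc_smooth_chart_z1_Qeps_if_X_smooth[OF assms(1,2) _ assms(4,5), of q3 q2 q1]
    by (simp add: X_smooth_def chart_x1_eq_pencil_det flip: chart_z1_eq_pencil_det)
qed

theorem lemma3p3: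
  fixes f2 f1 f0 h2 h1 h0 g2 g1 g0 :: "'a::field"
    and q1 q2 q3 :: "'a^3^3"
    and \<phi> :: "'a \<Rightarrow> 'K::field"
    and \<psi> :: "'a fls \<Rightarrow> 'L::field"
  assumes char: "(2::'a) \<noteq> 0"
    and K_closed: "alg_closed_type TYPE('K)" and \<phi>_hom: "field_hom \<phi>"
    and L_closed: "alg_closed_type TYPE('L)" and \<psi>_hom: "field_hom \<psi>"
    and C_smooth: "quartic_C_smooth (\<phi> f2) (\<phi> f1) (\<phi> f0) (\<phi> h2) (\<phi> h1) (\<phi> h0)
                     (\<phi> g2) (\<phi> g1) (\<phi> g0)"
    and D_smooth: "curve_D_smooth (\<phi> f2) (\<phi> f1) (\<phi> f0) (\<phi> h2) (\<phi> h1) (\<phi> h0)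
                     (\<phi> g2) (\<phi> g1) (\<phi> g0)"
    and A_inv: "det (vector [vector [f2, f1, f0], vector [h2, h1, h0], vector [g2, g1, g0]]
                  :: 'a^3^3) \<noteq> 0"
    and q_def1: "smat f2 q1 + smat f1 q2 + smat f0 q3 = qmat 0 0 0 1 0 0"
    and q_def2: "smat h2 q1 + smat h1 q2 + smat h0 q3 = qmat 0 1 0 0 1 0"
    and q_def3: "smat g2 q1 + smat g1 q2 + smat g0 q3 = qmat 0 0 0 0 0 1"
  shows "X_smooth (map_mat \<phi> q1) (map_mat \<phi> q2) (map_mat \<phi> q3)
       \<and> X_connected (map_mat \<phi> q1) (map_mat \<phi> q2) (map_mat \<phi> q3)
       \<and> X_smooth (map_mat \<psi> (Qeps q1 (qmat 0 1 1 0 0 0)))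
                  (map_mat \<psi> (Qeps q2 (qmat 1 0 0 0 0 0)))
                  (map_mat \<psi> (Qeps q3 (qmat 0 1 (-1) 0 0 0)))
       \<and> X_connected (map_mat \<psi> (Qeps q1 (qmat 0 1 1 0 0 0)))
                  (map_mat \<psi> (Qeps q2 (qmat 1 0 0 0 0 0)))
                  (map_mat \<psi> (Qeps q3 (qmat 0 1 (-1) 0 0 0)))"
proof -
  have special: "X_smooth (map_mat \<phi> q1) (map_mat \<phi> q2) (map_mat \<phi> q3)"
    using X_smooth_special_fibre[OF \<phi>_hom char C_smooth D_smooth A_inv q_def1 q_def2 q_def3] .
  have generic: "X_smooth (map_mat \<psi> (Qeps q1 (qmat 0 1 1 0 0 0)))
      (map_mat \<psi> (Qeps q2 (qmat 1 0 0 0 0 0))) (map_mat \<psi> (Qeps q3 (qmat 0 1 (-1) 0 0 0)))"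
    using X_smooth_generic_fibre[OF \<phi>_hom K_closed special \<psi>_hom char] .
  show ?thesis
    using special generic X_connected_if_X_smooth[OF K_closed] X_connected_if_X_smooth[OF L_closed]
    by blast
qed

end
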